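(* Let $s,t,p\ge 1$, $A,B\in GL(n)$ and $Q\in\mathcal{P}(n)$. The equation $X^s+A^*X^{-t}A+B^*X^{-p}B=Q$ has a Hermitian positive definite solution if and only if $A$ and $B$ can be factored as $$A=(U\Lambda U^* )^{\frac{t}{2s}}N_1,\qquad B=(U\Lambda U^* )^{\frac{p}{2s}}N_2,$$ where $U$ is an $n\times n$ unitary matrix, $\Lambda$ is an $n\times n$ diagonal matrix with positive diagonal entries, $N_1,N_2$ are $n\times n$ matrices, and the $3n\times n$ matrix $$\begin{pmatrix}\Lambda^{1/2}U^*Q^{-1/2}\\ N_1Q^{-1/2}\\ N_2Q^{-1/2}\end{pmatrix}$$ is column orthonormal (i.e. $M^*M=I_n$ for this matrix $M$).
   Context: $GL(n)$: $n\times n$ complex nonsingular matrices; $\mathcal{P}(n)$: $n\times n$ Hermitian positive definite matrices. Real powers of positive definite matrices are defined by functional calculus. *)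

theory Defs
  imports "HOL-Analysis.Analysis"
begin

definition cadj :: "complex^'n^'m \<Rightarrow> complex^'m^'n" where
  "cadj A = (\<chi> i j. cnj (A $ j $ i))"

definition unitary_mat :: "complex^'n^'n \<Rightarrow> bool" where
  "unitary_mat U \<longleftrightarrow> cadj U ** U = mat 1 \<and> U ** cadj U = mat 1"

definition hermitian_mat :: "complex^'n^'n \<Rightarrow> bool" where
  "hermitian_mat A \<longleftrightarrow> cadj A = A"

text \<open>Hermitian positive definite: x^* A x > 0 for all nonzero x (the form is real for Hermitian A).\<close>
definition posdef_mat :: "complex^'n^'n \<Rightarrow> bool" where
  "posdef_mat A \<longleftrightarrow> hermitian_mat A \<and>
     (\<forall>x::complex^'n. x \<noteq> 0 \<longrightarrow> Re (\<Sum>i\<in>UNIV. cnj (x $ i) * (A *v x) $ i) > 0)"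

definition cdiag :: "('n \<Rightarrow> real) \<Rightarrow> complex^'n^'n" where
  "cdiag d = (\<chi> i j. if i = j then complex_of_real (d i) else 0)"

definition mpow :: "complex^'n^'n \<Rightarrow> real \<Rightarrow> complex^'n^'n" where
  "mpow X r = (SOME Y. \<exists>U d. unitary_mat U \<and> (\<forall>i. d i > 0) \<and>
       X = U ** cdiag d ** cadj U \<and> Y = U ** cdiag (\<lambda>i. d i powr r) ** cadj U)"

end

theory Submission
  imports Defs
begin

text \<open>Diagonalise a solution as X = V diag(e) V^*, and put \<Lambda> = diag(e^s), N1 = X^(-t/2) A,
  N2 = X^(-p/2) B. Then X^s = V \<Lambda> V^*, A = (V \<Lambda> V^*)^(t/(2s)) N1 and A^* X^(-t) A = N1^* N1, and
  likewise for B, so the equation reads V \<Lambda> V^* + N1^* N1 + N2^* N2 = Q; the congruence with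
  Q^(-1/2) turns this into the column orthonormality of the stacked matrix. Conversely,
  X = (U \<Lambda> U^*)^(1/s) solves the equation.

  The spectral theorem for Hermitian matrices is proved by minimising the Rayleigh quotient on the
  orthogonal complement of the eigenvectors found so far; mpow is well defined because a function
  of a unitarily diagonalised matrix does not depend on the diagonalisation.\<close>

lemma cadj_mult: "cadj (A ** B) = cadj B ** cadj (A :: complex^'n^'m)"
  by (simp add: cadj_def matrix_matrix_mult_def vec_eq_iff mult.commute)

lemma cadj_cadj [simp]: "cadj (cadj A) = A"
  by (simp add: cadj_def vec_eq_iff)

lemma cadj_cdiag [simp]: "cadj (cdiag d) = cdiag d"
  by (simp add: cadj_def cdiag_def vec_eq_iff)

lemma matrix_add_rdistrib: "(B + C) ** A = B ** A + C ** A"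
  by (simp add: matrix_matrix_mult_def vec_eq_iff distrib_right sum.distrib)

lemma matrix_cdiag_component [simp]: "(A ** cdiag d) $ i $ j = A $ i $ j * of_real (d j)"
  by (simp add: matrix_matrix_mult_def cdiag_def if_distrib[of "\<lambda>x. _ * x"] cong: if_cong)

lemma cdiag_matrix_component [simp]: "(cdiag d ** A) $ i $ j = of_real (d i) * A $ i $ j"
  by (simp add: matrix_matrix_mult_def cdiag_def if_distrib[of "\<lambda>x. x * _"] cong: if_cong)

lemma cdiag_mult_vector_component [simp]: "(cdiag d *v x) $ i = of_real (d i) * x $ i"
  by (simp add: matrix_vector_mult_def cdiag_def if_distrib[of "\<lambda>x. x * _"] cong: if_cong)

lemma cdiag_mult: "cdiag a ** cdiag b = cdiag (\<lambda>i. a i * b i)"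
  by (simp add: vec_eq_iff) (simp add: cdiag_def)

lemma cdiag_1: "cdiag (\<lambda>i. 1) = mat 1"
  by (simp add: cdiag_def mat_def vec_eq_iff)

lemma cadj_mat_1 [simp]: "cadj (mat 1) = mat 1"
  by (simp add: cadj_def mat_def vec_eq_iff)

lemma unitary_mat_1: "unitary_mat (mat 1)"
  by (simp add: unitary_mat_def)

lemma unitary_mat_cancel:
  assumes "unitary_mat U"
  shows "cadj U ** U = mat 1" "U ** cadj U = mat 1" "X ** cadj U ** U = X" "X ** U ** cadj U = X"
  using assms unfolding unitary_mat_def by (simp_all add: matrix_mul_assoc[symmetric])

lemma scaleR_complex_vec_component: "(c *\<^sub>R (x :: complex^'n)) $ i = of_real c * x $ i"
  unfolding scaleR_vec_def vec_lambda_beta scaleR_conv_of_real ..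

lemma matrix_vector_mult_scaleR_complex: "A *v (c *\<^sub>R x) = c *\<^sub>R (A *v (x :: complex^'n))"
  by (simp add: vec_eq_iff matrix_vector_mult_def scaleR_complex_vec_component sum_distrib_left
      mult_ac del: vector_scaleR_component)

section \<open>The spectral theorem\<close>

definition cinner :: "complex^'n \<Rightarrow> complex^'n \<Rightarrow> complex" where
  "cinner x y = (\<Sum>i\<in>UNIV. cnj (x $ i) * y $ i)"

lemma cinner_cadj: "cinner x (A *v y) = cinner (cadj A *v x) y"
  unfolding cinner_def matrix_vector_mult_def cadj_def
  by (simp add: sum_distrib_left sum_distrib_right mult_ac) (rule sum.swap)

lemma cinner_zero_right [simp]: "cinner x 0 = 0"
  by (simp add: cinner_def)

lemma cinner_commute: "cinner y x = cnj (cinner x y)"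
  by (simp add: cinner_def mult.commute)

lemma cinner_add_left: "cinner (x + y) z = cinner x z + cinner y z"
  by (simp add: cinner_def distrib_right sum.distrib)

lemma cinner_add_right: "cinner z (x + y) = cinner z x + cinner z y"
  by (simp add: cinner_def distrib_left sum.distrib)

lemma cinner_diff_right: "cinner z (x - y) = cinner z x - cinner z y"
  by (simp add: cinner_def right_diff_distrib sum_subtractf)

lemma cinner_scaleR_left: "cinner (c *\<^sub>R x) z = of_real c * cinner x z"
  by (simp add: cinner_def sum_distrib_left scaleR_complex_vec_component mult_ac
      del: vector_scaleR_component)

lemma cinner_scaleR_right: "cinner z (c *\<^sub>R x) = of_real c * cinner z x"
  by (simp add: cinner_def sum_distrib_left scaleR_complex_vec_component mult_ac
      del: vector_scaleR_component)

lemma cinner_smult_left: "cinner (c *s x) z = cnj c * cinner x z"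
  by (simp add: cinner_def sum_distrib_left mult_ac)

lemma Re_cinner: "Re (cinner x y) = x \<bullet> y"
  by (simp add: cinner_def inner_vec_def inner_complex_def)

lemma cinner_self: "cinner x x = of_real (x \<bullet> x)"
  by (simp add: complex_eq_iff Re_cinner) (simp add: cinner_def)

lemma cinner_self_eq_0 [simp]: "cinner x x = 0 \<longleftrightarrow> x = 0"
  by (simp add: cinner_self)

lemma cinner_orthogonal_nonzero_exists:
  fixes S :: "(complex^'n) set"
  assumes "finite S" and "card S < CARD('n)"
  shows "\<exists>y. y \<noteq> 0 \<and> (\<forall>s\<in>S. cinner s y = 0)"
proof -
  \<comment> \<open>a vector real-orthogonal to s and to i s is complex-orthogonal to s\<close>
  let ?T = "S \<union> (\<lambda>s. \<i> *s s) ` S"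
  have "card ?T \<le> card S + card ((\<lambda>s. \<i> *s s) ` S)" by (rule card_Un_le)
  also have "card ((\<lambda>s. \<i> *s s) ` S) \<le> card S" by (rule card_image_le) (rule assms(1))
  finally have "card ?T < DIM(complex^'n)" using assms(2) by simp
  then have "span ?T \<noteq> UNIV"
    using dim_le_card[of UNIV ?T] assms(1) by fastforce
  then obtain a :: "complex^'n" where a: "a \<noteq> 0" "\<forall>x\<in>span ?T. a \<bullet> x = 0"
    using span_not_UNIV_orthogonal by blast
  have "cinner s a = 0" if "s \<in> S" for s
  proof -
    have "a \<bullet> s = 0" "a \<bullet> (\<i> *s s) = 0" using a(2) that by (auto intro: span_base)
    then have "Re (cinner s a) = 0" "Re (cinner (\<i> *s s) a) = 0"
      by (simp_all add: Re_cinner inner_commute)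
    then show ?thesis by (simp add: cinner_smult_left complex_eq_iff)
  qed
  with a show ?thesis by blast
qed

lemma nonneg_quadratic_imp_linear_coeff_zero:
  fixes a b :: real
  assumes "\<And>c. 0 \<le> 2 * c * a + c\<^sup>2 * b"
  shows "a = 0"
proof -
  define k where "k = \<bar>b\<bar> + 1"
  have k: "k > 0" "b - 2 * k < 0" unfolding k_def by auto
  have "2 * (-a / k) * a + (-a / k)\<^sup>2 * b = a\<^sup>2 * (b - 2 * k) / k\<^sup>2"
    using k by (simp add: field_simps power2_eq_square)
  then have "0 \<le> a\<^sup>2 * (b - 2 * k)"
    using assms[of "-a / k"] k by (simp add: zero_le_divide_iff)
  then show ?thesis
    using k by (auto simp: zero_le_mult_iff)
qed

lemma rayleigh_minimizer_is_eigenvector: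
  fixes A :: "complex^'n^'n"
  assumes herm: "cadj A = A"
    and W: "subspace W" "\<And>z. z \<in> W \<Longrightarrow> \<i> *s z \<in> W" "\<And>z. z \<in> W \<Longrightarrow> A *v z \<in> W"
    and x: "x \<in> W" "cinner x x = 1"
    and x_min: "\<And>z. z \<in> W \<Longrightarrow> Re (cinner x (A *v x)) * Re (cinner z z) \<le> Re (cinner z (A *v z))"
  shows "A *v x = Re (cinner x (A *v x)) *\<^sub>R x"
proof -
  define l where "l = Re (cinner x (A *v x))"
  \<comment> \<open>G is a positive semidefinite Hermitian form on W with G x x = 0, so x is in its radical\<close>
  define G where "G u v = cinner u (A *v v) - of_real l * cinner u v" for u v
  have G_nonneg: "0 \<le> Re (G z z)" if "z \<in> W" for z
    using x_min[OF that] by (simp add: G_def l_def)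
  have G_xx: "Re (G x x) = 0"
    by (simp add: G_def x(2) l_def)
  have G_sym: "G v u = cnj (G u v)" for u v
    using cinner_cadj[of v A u] cinner_commute[of u "A *v v"] cinner_commute[of u v]
    by (simp add: G_def herm)
  have G_expand: "G (u + c *\<^sub>R w) (u + c *\<^sub>R w) = G u u + of_real c * (G u w + G w u) + of_real (c\<^sup>2) * G w w"
    for u w c
    by (simp add: G_def matrix_vector_mult_scaleR_complex cinner_add_left
        cinner_add_right cinner_scaleR_left cinner_scaleR_right algebra_simps power2_eq_square)
  have Re_G_0: "Re (G w x) = 0" if "w \<in> W" for w
  proof (rule nonneg_quadratic_imp_linear_coeff_zero)
    fix c :: real
    have "0 \<le> Re (G (x + c *\<^sub>R w) (x + c *\<^sub>R w))"
      using W(1) x(1) that by (intro G_nonneg subspace_add subspace_scale)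
    also have "\<dots> = 2 * c * Re (G w x) + c\<^sup>2 * Re (G w w)"
      unfolding G_expand using G_xx G_sym[of x w] by simp
    finally show "0 \<le> 2 * c * Re (G w x) + c\<^sup>2 * Re (G w w)" .
  qed
  have G_0: "G w x = 0" if "w \<in> W" for w
  proof -
    have "G (\<i> *s w) x = - \<i> * G w x"
      by (simp add: G_def cinner_smult_left algebra_simps)
    then have "Im (G w x) = 0"
      using Re_G_0[OF W(2)[OF that]] by simp
    with Re_G_0[OF that] show ?thesis by (simp add: complex_eq_iff)
  qed
  define r where "r = A *v x - l *\<^sub>R x"
  have "r \<in> W"
    unfolding r_def using W x(1) by (intro subspace_diff subspace_scale) auto
  moreover have "G w x = cinner w r" for w
    by (simp add: G_def r_def cinner_diff_right cinner_scaleR_right)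
  ultimately have "r = 0"
    using G_0 by (metis cinner_self_eq_0)
  then show ?thesis by (simp add: r_def l_def)
qed

lemma continuous_on_cinner [continuous_intros]:
  "continuous_on S f \<Longrightarrow> continuous_on S g \<Longrightarrow> continuous_on S (\<lambda>x. cinner (f x) (g x))"
  unfolding cinner_def by (intro continuous_intros)

lemma continuous_on_matrix_vector_mult [continuous_intros]:
  "continuous_on S f \<Longrightarrow> continuous_on S (\<lambda>x. (A :: complex^'n^'m) *v f x)"
  unfolding matrix_vector_mult_def by (intro continuous_intros)

lemma hermitian_eigenvector_orthogonal_exists:
  fixes A :: "complex^'n^'n"
  assumes herm: "cadj A = A" and "finite S" and "card S < CARD('n)"
    and eig: "\<forall>v\<in>S. \<exists>c::real. A *v v = c *\<^sub>R v"
  shows "\<exists>x. cinner x x = 1 \<and> (\<forall>s\<in>S. cinner s x = 0) \<and> (\<exists>c::real. A *v x = c *\<^sub>R x)"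
proof -
  define W where "W = {x. \<forall>s\<in>S. cinner s x = 0}"
  have W: "subspace W"
    by (simp add: W_def subspace_def cinner_add_right cinner_scaleR_right)
  have W_smult: "\<i> *s z \<in> W" if "z \<in> W" for z
    using that by (simp add: W_def cinner_def sum_distrib_left[symmetric] mult.left_commute)
  have W_A: "A *v z \<in> W" if "z \<in> W" for z
  proof -
    have "cinner s (A *v z) = 0" if "s \<in> S" for s
    proof -
      obtain c where "A *v s = c *\<^sub>R s" using eig \<open>s \<in> S\<close> by blast
      then show ?thesis
        using cinner_cadj[of s A z] \<open>z \<in> W\<close> \<open>s \<in> S\<close> by (simp add: herm W_def cinner_scaleR_left)
    qed
    then show ?thesis by (simp add: W_def)
  qed
  define K where "K = W \<inter> sphere 0 1"
  obtain y where "y \<noteq> 0" "y \<in> W"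
    using cinner_orthogonal_nonzero_exists[OF assms(2,3)] unfolding W_def by blast
  then have "(1 / norm y) *\<^sub>R y \<in> K"
    using W by (simp add: K_def subspace_scale)
  then have "K \<noteq> {}" by blast
  have "closed {x. cinner s x = 0}" for s :: "complex^'n"
    by (intro closed_Collect_eq continuous_intros)
  then have "closed W"
    unfolding W_def Collect_ball_eq by blast
  then have "compact K" unfolding K_def by (intro closed_Int_compact compact_sphere)
  define f where "f z = Re (cinner z (A *v z))" for z
  have "continuous_on K f" unfolding f_def by (intro continuous_intros)
  then obtain x where x: "x \<in> K" and x_min: "\<And>z. z \<in> K \<Longrightarrow> f x \<le> f z"
    using continuous_attains_inf[OF \<open>compact K\<close> \<open>K \<noteq> {}\<close>] by blast
  then have "x \<in> W" "cinner x x = 1"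
    by (auto simp: K_def cinner_self dot_square_norm)
  have "f x * Re (cinner z z) \<le> f z" if "z \<in> W" for z
  proof (cases "z = 0")
    case False
    then have "(1 / norm z) *\<^sub>R z \<in> K"
      using W that by (simp add: K_def subspace_scale)
    moreover have "f ((1 / norm z) *\<^sub>R z) = f z / (norm z)\<^sup>2"
      by (simp add: f_def matrix_vector_mult_scaleR_complex cinner_scaleR_left cinner_scaleR_right
          power2_eq_square)
    ultimately have "f x \<le> f z / (norm z)\<^sup>2"
      using x_min by metis
    then show ?thesis
      using False by (simp add: cinner_self dot_square_norm field_simps)
  qed (simp add: f_def)
  then have "A *v x = f x *\<^sub>R x"
    using rayleigh_minimizer_is_eigenvector[OF herm W W_smult W_A \<open>x \<in> W\<close> \<open>cinner x x = 1\<close>]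
    unfolding f_def by blast
  with \<open>x \<in> W\<close> \<open>cinner x x = 1\<close> show ?thesis
    unfolding W_def by blast
qed

lemma hermitian_orthonormal_eigenvectors_exist:
  fixes A :: "complex^'n^'n"
  assumes "cadj A = A" and "k \<le> CARD('n)"
  shows "\<exists>S. finite S \<and> card S = k \<and> (\<forall>u\<in>S. \<forall>v\<in>S. cinner u v = (if u = v then 1 else 0)) \<and>
    (\<forall>v\<in>S. \<exists>c::real. A *v v = c *\<^sub>R v)"
  using assms(2)
proof (induction k)
  case 0
  show ?case by (intro exI[of _ "{}"]) simp
next
  case (Suc k)
  then obtain S where S: "finite S" "card S = k"
    "\<forall>u\<in>S. \<forall>v\<in>S. cinner u v = (if u = v then 1 else 0)" "\<forall>v\<in>S. \<exists>c::real. A *v v = c *\<^sub>R v"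
    by auto
  obtain x where x: "cinner x x = 1" "\<forall>s\<in>S. cinner s x = 0" "\<exists>c::real. A *v x = c *\<^sub>R x"
    using hermitian_eigenvector_orthogonal_exists[OF assms(1) S(1)] S(2,4) Suc.prems by auto
  have "x \<notin> S"
    using x(1,2) by fastforce
  moreover have "\<forall>s\<in>S. cinner x s = 0"
    using x(2) cinner_commute[of x] by simp
  ultimately show ?case
    using S x by (intro exI[of _ "insert x S"]) auto
qed

theorem hermitian_unitary_diagonalization:
  fixes A :: "complex^'n^'n"
  assumes "hermitian_mat A"
  shows "\<exists>U d. unitary_mat U \<and> A = U ** cdiag d ** cadj U"
proof -
  have herm: "cadj A = A" using assms by (simp add: hermitian_mat_def)
  obtain S where S: "finite S" "card S = CARD('n)"
    "\<forall>u\<in>S. \<forall>v\<in>S. cinner u v = (if u = v then 1 else 0)" "\<forall>v\<in>S. \<exists>c::real. A *v v = c *\<^sub>R v"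
    using hermitian_orthonormal_eigenvectors_exist[OF herm order_refl] by blast
  obtain g where g: "bij_betw g (UNIV :: 'n set) S"
    using finite_same_card_bij[of "UNIV :: 'n set" S] S(1,2) by auto
  then have g_S: "g j \<in> S" and g_eq: "g j = g k \<longleftrightarrow> j = k" for j k
    by (auto simp: bij_betw_def inj_on_def)
  have "\<forall>j. \<exists>c::real. A *v g j = c *\<^sub>R g j"
    using S(4) g_S by blast
  then obtain d where d: "\<forall>j. A *v g j = d j *\<^sub>R g j"
    by (rule choice[THEN exE])
  define U where "U = (\<chi> i j. g j $ i)"
  have "cadj U ** U = mat 1"
  proof -
    have "(cadj U ** U) $ j $ k = cinner (g j) (g k)" for j k
      by (simp add: cadj_def U_def matrix_matrix_mult_def cinner_def)
    then show ?thesis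
      using S(3) g_S g_eq by (simp add: mat_def vec_eq_iff)
  qed
  then have U: "unitary_mat U"
    unfolding unitary_mat_def using matrix_left_right_inverse by blast
  have "(A ** U) $ i $ j = (A *v g j) $ i" for i j
    by (simp add: U_def matrix_matrix_mult_def matrix_vector_mult_def)
  then have "A ** U = U ** cdiag d"
    using d by (simp add: vec_eq_iff U_def scaleR_complex_vec_component mult.commute
        del: vector_scaleR_component)
  then have "A = U ** cdiag d ** cadj U"
    using unitary_mat_cancel(4)[OF U, of A] by simp
  with U show ?thesis by blast
qed

lemma quadratic_form_unitary_diag:
  assumes "unitary_mat U"
  shows "Re (cinner x ((U ** cdiag d ** cadj U) *v x)) = (\<Sum>k\<in>UNIV. d k * (cmod ((cadj U *v x) $ k))\<^sup>2)"
proof -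
  have "cinner x ((U ** cdiag d ** cadj U) *v x) = cinner (cadj U *v x) (cdiag d *v (cadj U *v x))"
    by (simp add: cinner_cadj matrix_vector_mul_assoc[symmetric])
  moreover have "Re (cnj z * (of_real r * z)) = r * (cmod z)\<^sup>2" for z r
    unfolding cmod_power2 by (simp add: power2_eq_square algebra_simps)
  ultimately show ?thesis
    by (simp add: cinner_def)
qed

lemma weighted_sum_cmod_sq_pos_iff:
  "(\<forall>y :: complex^'n. y \<noteq> 0 \<longrightarrow> 0 < (\<Sum>k\<in>UNIV. d k * (cmod (y $ k))\<^sup>2)) \<longleftrightarrow> (\<forall>i. d i > 0)"
proof safe
  fix i assume "\<forall>y :: complex^'n. y \<noteq> 0 \<longrightarrow> 0 < (\<Sum>k\<in>UNIV. d k * (cmod (y $ k))\<^sup>2)"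
  then have "0 < (\<Sum>k\<in>UNIV. d k * (cmod (axis i 1 $ k))\<^sup>2)"
    by simp
  also have "(\<Sum>k\<in>UNIV. d k * (cmod (axis i 1 $ k))\<^sup>2) = d i"
    by (simp add: axis_def if_distrib[of cmod] if_distrib[of "\<lambda>x. d _ * x\<^sup>2"] cong: if_cong)
  finally show "d i > 0" .
next
  fix y :: "complex^'n" assume d: "\<forall>i. d i > 0" and "y \<noteq> 0"
  then obtain k where "y $ k \<noteq> 0"
    by (auto simp: vec_eq_iff)
  then show "0 < (\<Sum>k\<in>UNIV. d k * (cmod (y $ k))\<^sup>2)"
    using d by (intro sum_pos2[of UNIV k]) (simp_all add: less_imp_le)
qed

lemma posdef_unitary_diag_iff:
  fixes U :: "complex^'n^'n"
  assumes U: "unitary_mat U"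
  shows "posdef_mat (U ** cdiag d ** cadj U) \<longleftrightarrow> (\<forall>i. d i > 0)"
proof -
  define P where "P y = (\<Sum>k\<in>UNIV. d k * (cmod (y $ k))\<^sup>2)" for y :: "complex^'n"
  have inv: "U *v (cadj U *v x) = x" "cadj U *v (U *v x) = x" for x
    using U by (simp_all add: matrix_vector_mul_assoc unitary_mat_cancel)
  have "(\<forall>x. x \<noteq> 0 \<longrightarrow> 0 < P (cadj U *v x)) \<longleftrightarrow> (\<forall>y. y \<noteq> 0 \<longrightarrow> 0 < P y)"
  proof (intro iffI allI impI)
    fix y :: "complex^'n" assume "\<forall>x. x \<noteq> 0 \<longrightarrow> 0 < P (cadj U *v x)" "y \<noteq> 0"
    moreover have "U *v y \<noteq> 0"
      using inv(2)[of y] \<open>y \<noteq> 0\<close> by auto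
    ultimately show "0 < P y"
      using inv(2)[of y] by metis
  next
    fix x :: "complex^'n" assume "\<forall>y. y \<noteq> 0 \<longrightarrow> 0 < P y" "x \<noteq> 0"
    moreover have "cadj U *v x \<noteq> 0"
      using inv(1)[of x] \<open>x \<noteq> 0\<close> by auto
    ultimately show "0 < P (cadj U *v x)" by blast
  qed
  moreover have "hermitian_mat (U ** cdiag d ** cadj U)"
    by (simp add: hermitian_mat_def cadj_mult matrix_mul_assoc)
  ultimately show ?thesis
    using quadratic_form_unitary_diag[OF U] weighted_sum_cmod_sq_pos_iff[of d]
    unfolding posdef_mat_def P_def cinner_def by simp
qed

corollary posdef_unitary_diagonalization:
  assumes "posdef_mat A"
  shows "\<exists>U d. unitary_mat U \<and> (\<forall>i. d i > 0) \<and> A = U ** cdiag d ** cadj U"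
proof -
  obtain U d where U: "unitary_mat U" and A: "A = U ** cdiag d ** cadj U"
    using assms hermitian_unitary_diagonalization unfolding posdef_mat_def by blast
  then have "\<forall>i. d i > 0"
    using assms posdef_unitary_diag_iff by blast
  with U A show ?thesis by blast
qed

section \<open>Functional calculus\<close>

lemma commute_cdiag_fun:
  fixes W :: "complex^'n^'n"
  assumes "W ** cdiag d = cdiag e ** W"
  shows "W ** cdiag (\<lambda>i. f (d i)) = cdiag (\<lambda>i. f (e i)) ** W"
proof -
  have "(W ** cdiag d) $ i $ j = (cdiag e ** W) $ i $ j" for i j
    using assms by simp
  then have "W $ i $ j = 0 \<or> d j = e i" for i j
    by (simp add: mult.commute)
  then have "W $ i $ j * of_real (f (d j)) = of_real (f (e i)) * W $ i $ j" for i j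
    by (metis mult.commute mult_zero_left)
  then show ?thesis
    by (simp add: vec_eq_iff)
qed

lemma unitary_diag_fun_unique:
  assumes U: "unitary_mat U" and V: "unitary_mat V"
    and eq: "U ** cdiag d ** cadj U = V ** cdiag e ** cadj V"
  shows "U ** cdiag (\<lambda>i. f (d i)) ** cadj U = V ** cdiag (\<lambda>i. f (e i)) ** cadj V"
proof -
  define W where "W = cadj V ** U"
  have "cadj V ** (U ** cdiag d ** cadj U) ** U = cadj V ** (V ** cdiag e ** cadj V) ** U"
    using eq by simp
  then have "W ** cdiag d = cdiag e ** W"
    using U V unfolding W_def by (simp add: matrix_mul_assoc unitary_mat_cancel)
  then have "W ** cdiag (\<lambda>i. f (d i)) = cdiag (\<lambda>i. f (e i)) ** W"
    by (rule commute_cdiag_fun)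
  moreover have "V ** W = U" "W ** cadj U = cadj V"
    using U V unfolding W_def by (simp_all add: matrix_mul_assoc unitary_mat_cancel)
  ultimately have "U ** cdiag (\<lambda>i. f (d i)) ** cadj U = V ** (cdiag (\<lambda>i. f (e i)) ** W) ** cadj U"
    by (metis matrix_mul_assoc)
  also have "\<dots> = V ** cdiag (\<lambda>i. f (e i)) ** cadj V"
    using \<open>W ** cadj U = cadj V\<close> by (simp add: matrix_mul_assoc[symmetric])
  finally show ?thesis .
qed

definition spectral_powr :: "complex^'n^'n \<Rightarrow> ('n \<Rightarrow> real) \<Rightarrow> real \<Rightarrow> complex^'n^'n" where
  "spectral_powr U d r = U ** cdiag (\<lambda>i. d i powr r) ** cadj U"

lemma mpow_unitary_diag:
  assumes U: "unitary_mat U" and d: "\<forall>i. d i > 0"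
  shows "mpow (U ** cdiag d ** cadj U) r = spectral_powr U d r"
proof -
  let ?P = "\<lambda>Y. \<exists>V e. unitary_mat V \<and> (\<forall>i. e i > 0) \<and>
       U ** cdiag d ** cadj U = V ** cdiag e ** cadj V \<and> Y = V ** cdiag (\<lambda>i. e i powr r) ** cadj V"
  have "?P (spectral_powr U d r)"
    using U d unfolding spectral_powr_def by blast
  then have "?P (mpow (U ** cdiag d ** cadj U) r)"
    unfolding mpow_def by (rule someI)
  then obtain V e where "unitary_mat V" "U ** cdiag d ** cadj U = V ** cdiag e ** cadj V"
    "mpow (U ** cdiag d ** cadj U) r = V ** cdiag (\<lambda>i. e i powr r) ** cadj V"
    by blast
  then show ?thesis
    unfolding spectral_powr_def using unitary_diag_fun_unique[OF U, of V d e "\<lambda>x. x powr r"] by simp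
qed

lemma cadj_spectral_powr [simp]: "cadj (spectral_powr U d r) = spectral_powr U d r"
  by (simp add: spectral_powr_def cadj_mult matrix_mul_assoc)

lemma spectral_powr_add:
  assumes "unitary_mat U"
  shows "spectral_powr U d a ** spectral_powr U d b = spectral_powr U d (a + b)"
proof -
  have "spectral_powr U d a ** spectral_powr U d b
      = U ** (cdiag (\<lambda>i. d i powr a) ** (cadj U ** U) ** cdiag (\<lambda>i. d i powr b)) ** cadj U"
    unfolding spectral_powr_def by (simp add: matrix_mul_assoc)
  then show ?thesis
    using assms unfolding spectral_powr_def by (simp add: unitary_mat_cancel cdiag_mult powr_add)
qed

lemma spectral_powr_0:
  assumes "unitary_mat U" and "\<forall>i. d i > 0"
  shows "spectral_powr U d 0 = mat 1"
  using assms by (simp add: spectral_powr_def cdiag_1 unitary_mat_cancel less_imp_neq[symmetric])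

lemma spectral_powr_1:
  assumes "\<forall>i. d i > 0"
  shows "spectral_powr U d 1 = U ** cdiag d ** cadj U"
  using assms by (simp add: spectral_powr_def less_imp_le)

lemma mpow_spectral_powr:
  assumes U: "unitary_mat U" and d: "\<forall>i. d i > 0"
  shows "mpow (spectral_powr U d c) r = spectral_powr U d (c * r)"
proof -
  have "mpow (spectral_powr U d c) r = spectral_powr U (\<lambda>i. d i powr c) r"
    unfolding spectral_powr_def[of U d c] using U d
    by (intro mpow_unitary_diag) (simp_all add: less_imp_neq[symmetric])
  then show ?thesis
    using d by (simp add: spectral_powr_def powr_powr)
qed

lemma mpow_cdiag:
  assumes "\<forall>i. d i > 0"
  shows "mpow (cdiag d) r = cdiag (\<lambda>i. d i powr r)"
  using mpow_unitary_diag[OF unitary_mat_1 assms, of r] by (simp add: spectral_powr_def)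

lemma spectral_powr_add_left:
  assumes "unitary_mat U"
  shows "Y ** spectral_powr U d a ** spectral_powr U d b = Y ** spectral_powr U d (a + b)"
  using assms by (simp add: spectral_powr_add matrix_mul_assoc[symmetric])

section \<open>The matrix equation\<close>

lemma spectral_powr_sandwich:
  assumes "unitary_mat U" and "\<forall>i. d i > 0"
  shows "cadj (spectral_powr U d a ** N) ** spectral_powr U d (-2 * a) ** (spectral_powr U d a ** N)
    = cadj N ** N"
proof -
  have "cadj (spectral_powr U d a ** N) ** spectral_powr U d (-2 * a) ** (spectral_powr U d a ** N)
      = cadj N ** spectral_powr U d (a + -2 * a + a) ** N"
    using assms(1) by (simp add: cadj_mult matrix_mul_assoc spectral_powr_add_left del: mult_minus_left)
  also have "a + -2 * a + a = 0" by simp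
  finally show ?thesis
    using assms by (simp add: spectral_powr_0)
qed

lemma cadj_mpow:
  assumes "posdef_mat X"
  shows "cadj (mpow X r) = mpow X r"
  using posdef_unitary_diagonalization[OF assms] mpow_unitary_diag cadj_spectral_powr by metis

lemma inv_sqrt_congruence_eq_1_iff:
  assumes "posdef_mat Q"
  shows "mpow Q (-1/2) ** Z ** mpow Q (-1/2) = mat 1 \<longleftrightarrow> Z = Q"
proof -
  obtain W q where W: "unitary_mat W" and q: "\<forall>i. q i > 0" and Q: "Q = W ** cdiag q ** cadj W"
    using posdef_unitary_diagonalization[OF assms] by blast
  have R: "mpow Q (-1/2) = spectral_powr W q (-1/2)"
    unfolding Q using W q by (rule mpow_unitary_diag)
  have Q_sqrt: "spectral_powr W q (1/2) ** spectral_powr W q (1/2) = Q"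
    unfolding Q using W q by (simp add: spectral_powr_add spectral_powr_1)
  show ?thesis
  proof
    assume "mpow Q (-1/2) ** Z ** mpow Q (-1/2) = mat 1"
    then have "spectral_powr W q (1/2) ** (mpow Q (-1/2) ** Z ** mpow Q (-1/2))
        ** spectral_powr W q (1/2) = Q"
      using Q_sqrt by simp
    then show "Z = Q"
      unfolding R using W q
      by (simp add: matrix_mul_assoc spectral_powr_add spectral_powr_add_left spectral_powr_0)
  next
    assume "Z = Q"
    have "spectral_powr W q (-1/2) ** Q ** spectral_powr W q (-1/2) = mat 1"
      unfolding Q_sqrt[symmetric] using W q
      by (simp add: matrix_mul_assoc spectral_powr_add spectral_powr_add_left spectral_powr_0)
    then show "mpow Q (-1/2) ** Z ** mpow Q (-1/2) = mat 1"
      unfolding R \<open>Z = Q\<close> .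
  qed
qed

lemma cadj_mult_self_congruence:
  "cadj R = R \<Longrightarrow> cadj (M ** R) ** (M ** R) = R ** (cadj M ** M) ** R"
  by (simp add: cadj_mult matrix_mul_assoc)

lemma stacked_column_orthonormal_iff:
  assumes Q: "posdef_mat Q" and d: "\<forall>i. d i > 0"
  shows "(let M1 = mpow (cdiag d) (1/2) ** cadj U ** mpow Q (-1/2);
              M2 = N1 ** mpow Q (-1/2);
              M3 = N2 ** mpow Q (-1/2)
          in cadj M1 ** M1 + cadj M2 ** M2 + cadj M3 ** M3 = mat 1)
    \<longleftrightarrow> U ** cdiag d ** cadj U + cadj N1 ** N1 + cadj N2 ** N2 = Q"
proof -
  have "cadj (mpow (cdiag d) (1/2) ** cadj U) ** (mpow (cdiag d) (1/2) ** cadj U)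
      = U ** (cdiag (\<lambda>i. d i powr (1/2)) ** cdiag (\<lambda>i. d i powr (1/2))) ** cadj U"
    using d by (simp add: mpow_cdiag cadj_mult matrix_mul_assoc)
  also have "cdiag (\<lambda>i. d i powr (1/2)) ** cdiag (\<lambda>i. d i powr (1/2)) = cdiag d"
    using d by (simp add: cdiag_mult powr_add[symmetric] less_imp_le)
  finally have "cadj (mpow (cdiag d) (1/2) ** cadj U) ** (mpow (cdiag d) (1/2) ** cadj U)
      = U ** cdiag d ** cadj U" .
  then have "(let M1 = mpow (cdiag d) (1/2) ** cadj U ** mpow Q (-1/2);
                  M2 = N1 ** mpow Q (-1/2);
                  M3 = N2 ** mpow Q (-1/2)
              in cadj M1 ** M1 + cadj M2 ** M2 + cadj M3 ** M3 = mat 1)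
      \<longleftrightarrow> mpow Q (-1/2) ** (U ** cdiag d ** cadj U + cadj N1 ** N1 + cadj N2 ** N2) ** mpow Q (-1/2) = mat 1"
    unfolding Let_def cadj_mult_self_congruence[OF cadj_mpow[OF Q]]
    by (simp add: matrix_add_ldistrib matrix_add_rdistrib)
  then show ?thesis
    unfolding inv_sqrt_congruence_eq_1_iff[OF Q] .
qed

lemma solvable_iff_factorization:
  fixes A B Q :: "complex^'n^'n"
  assumes s: "s \<noteq> 0"
  shows "(\<exists>X. posdef_mat X \<and> mpow X s + cadj A ** mpow X (-t) ** A + cadj B ** mpow X (-p) ** B = Q)
    \<longleftrightarrow> (\<exists>U d N1 N2. unitary_mat U \<and> (\<forall>i. d i > 0) \<and>
          A = mpow (U ** cdiag d ** cadj U) (t / (2 * s)) ** N1 \<and>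
          B = mpow (U ** cdiag d ** cadj U) (p / (2 * s)) ** N2 \<and>
          U ** cdiag d ** cadj U + cadj N1 ** N1 + cadj N2 ** N2 = Q)"
proof
  assume "\<exists>X. posdef_mat X \<and> mpow X s + cadj A ** mpow X (-t) ** A + cadj B ** mpow X (-p) ** B = Q"
  then obtain X where X: "posdef_mat X"
    and eq: "mpow X s + cadj A ** mpow X (-t) ** A + cadj B ** mpow X (-p) ** B = Q"
    by blast
  obtain V e where V: "unitary_mat V" and e: "\<forall>i. e i > 0" and X_eq: "X = V ** cdiag e ** cadj V"
    using posdef_unitary_diagonalization[OF X] by blast
  define d where "d = (\<lambda>i. e i powr s)"
  have d: "\<forall>i. d i > 0"
    using e by (simp add: d_def less_imp_neq[symmetric])
  have mpow_X: "mpow X r = spectral_powr V e r" for r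
    unfolding X_eq using V e by (rule mpow_unitary_diag)
  have Vd: "V ** cdiag d ** cadj V = mpow X s"
    by (simp add: mpow_X spectral_powr_def d_def)
  have factor: "M = mpow (V ** cdiag d ** cadj V) (r / (2 * s)) ** N \<and>
      cadj M ** mpow X (-r) ** M = cadj N ** N"
    if N: "N = spectral_powr V e (-r/2) ** M" for M N r
  proof -
    have half: "mpow (V ** cdiag d ** cadj V) (r / (2 * s)) = spectral_powr V e (r/2)"
      using s V e by (simp add: Vd mpow_X mpow_spectral_powr)
    have M: "M = spectral_powr V e (r/2) ** N"
      using V e by (simp add: N matrix_mul_assoc spectral_powr_add spectral_powr_0)
    moreover have "cadj M ** mpow X (-r) ** M = cadj N ** N"
      using spectral_powr_sandwich[OF V e, of "r/2" N] by (simp add: M mpow_X)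
    ultimately show ?thesis
      by (simp add: half)
  qed
  define N1 where "N1 = spectral_powr V e (-t/2) ** A"
  define N2 where "N2 = spectral_powr V e (-p/2) ** B"
  from factor[OF N1_def] factor[OF N2_def]
  have A: "A = mpow (V ** cdiag d ** cadj V) (t / (2 * s)) ** N1"
    and B: "B = mpow (V ** cdiag d ** cadj V) (p / (2 * s)) ** N2"
    and "cadj A ** mpow X (-t) ** A = cadj N1 ** N1" "cadj B ** mpow X (-p) ** B = cadj N2 ** N2"
    by blast+
  then have "V ** cdiag d ** cadj V + cadj N1 ** N1 + cadj N2 ** N2 = Q"
    using eq by (simp only: Vd)
  with V d A B show "\<exists>U d N1 N2. unitary_mat U \<and> (\<forall>i. d i > 0) \<and>
          A = mpow (U ** cdiag d ** cadj U) (t / (2 * s)) ** N1 \<and>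
          B = mpow (U ** cdiag d ** cadj U) (p / (2 * s)) ** N2 \<and>
          U ** cdiag d ** cadj U + cadj N1 ** N1 + cadj N2 ** N2 = Q"
    by blast
next
  assume "\<exists>U d N1 N2. unitary_mat U \<and> (\<forall>i. d i > 0) \<and>
          A = mpow (U ** cdiag d ** cadj U) (t / (2 * s)) ** N1 \<and>
          B = mpow (U ** cdiag d ** cadj U) (p / (2 * s)) ** N2 \<and>
          U ** cdiag d ** cadj U + cadj N1 ** N1 + cadj N2 ** N2 = Q"
  then obtain U d N1 N2 where U: "unitary_mat U" and d: "\<forall>i. d i > 0"
    and A: "A = mpow (U ** cdiag d ** cadj U) (t / (2 * s)) ** N1"
    and B: "B = mpow (U ** cdiag d ** cadj U) (p / (2 * s)) ** N2"
    and Q_eq: "U ** cdiag d ** cadj U + cadj N1 ** N1 + cadj N2 ** N2 = Q"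
    by blast
  define X where "X = spectral_powr U d (1/s)"
  have "posdef_mat X"
    unfolding X_def spectral_powr_def using U d
    by (simp add: posdef_unitary_diag_iff less_imp_neq[symmetric])
  have mpow_X: "mpow X r = spectral_powr U d (1/s * r)" for r
    unfolding X_def using U d by (rule mpow_spectral_powr)
  have "mpow X s = U ** cdiag d ** cadj U"
    using s d by (simp add: mpow_X spectral_powr_1)
  moreover have "cadj M ** mpow X (-r) ** M = cadj N ** N"
    if M: "M = mpow (U ** cdiag d ** cadj U) (r / (2 * s)) ** N" for M N r
  proof -
    have "-2 * (r / (2 * s)) = 1/s * -r"
      using s by (simp add: field_simps)
    then show ?thesis
      using spectral_powr_sandwich[OF U d, of "r / (2 * s)" N]
      by (simp add: M mpow_X mpow_unitary_diag[OF U d])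
  qed
  ultimately show "\<exists>X. posdef_mat X \<and>
      mpow X s + cadj A ** mpow X (-t) ** A + cadj B ** mpow X (-p) ** B = Q"
    using \<open>posdef_mat X\<close> A B Q_eq by metis
qed

theorem mainTheorem11:
  fixes s t p :: real and A B Q :: "complex^'n^'n"
  assumes "s \<ge> 1" "t \<ge> 1" "p \<ge> 1"
    and "invertible A" "invertible B" "posdef_mat Q"
  shows "(\<exists>X. posdef_mat X \<and>
            mpow X s + cadj A ** mpow X (-t) ** A + cadj B ** mpow X (-p) ** B = Q)
     \<longleftrightarrow>
         (\<exists>U d N1 N2. unitary_mat U \<and> (\<forall>i. d i > 0) \<and>
            A = mpow (U ** cdiag d ** cadj U) (t / (2 * s)) ** N1 \<and>
            B = mpow (U ** cdiag d ** cadj U) (p / (2 * s)) ** N2 \<and>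
            (let M1 = mpow (cdiag d) (1/2) ** cadj U ** mpow Q (-1/2);
                 M2 = N1 ** mpow Q (-1/2);
                 M3 = N2 ** mpow Q (-1/2)
             in cadj M1 ** M1 + cadj M2 ** M2 + cadj M3 ** M3 = mat 1))"
proof -
  have "s \<noteq> 0" using assms(1) by simp
  then show ?thesis
    unfolding solvable_iff_factorization[OF \<open>s \<noteq> 0\<close>]
    using stacked_column_orthonormal_iff[OF assms(6)] by blast
qed

end
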